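(* Let $(T_i,X_i,Y_i^1)$, $i=1,\dots,n$, be i.i.d. copies of $(T,X,Y^1)$, with $T\in\{0,1\}$ and $T$ conditionally independent of $Y^1$ given $X$; the observed outcome satisfies $Y_i=Y_i^1$ whenever $T_i=1$. Let $\pi^*(X)=P(T=1\mid X)$ and $\mu^1=E(Y^1)$. Suppose $E\{(Y^1)^2\mid X\}\le c$ and $\pi^*(X)\ge\delta$ almost surely for constants $c>0$ and $\delta\in(0,1)$. Then for any fixed $\gamma$, $$E\big[\{\hat\mu^1_{\mathrm{IPW}}(\gamma)-\mu^1\}^2\big]\le c\,\mathrm{MSRE}(\gamma)+\frac{2}{n\delta}\,c\,\{1+\mathrm{MSRE}(\gamma)\}.$$
   Context: $\pi(X;\gamma)=\{1+e^{-\gamma^\top f(X)}\}^{-1}$ with $f=(1,f_1,\dots,f_p)^\top$; $\hat\mu^1_{\mathrm{IPW}}(\gamma)=n^{-1}\sum_{i=1}^nT_iY_i/\pi(X_i;\gamma)$; $\mathrm{MSRE}(\gamma)=E[\{\pi^*(X)/\pi(X;\gamma)-1\}^2]$. *)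

theory Defs
  imports "HOL-Probability.Probability"
begin

definition sigmaX :: "'a measure \<Rightarrow> 'b measure \<Rightarrow> ('a \<Rightarrow> 'b) \<Rightarrow> 'a measure" where
  "sigmaX M N X = vimage_algebra (space M) X N"

text \<open>Logistic propensity score model pi(x;gamma) = 1/(1+exp(-gamma^T f(x))),
  with feature vector f = (f 0, f 1, ..., f p), where f 0 = 1 is the intercept.\<close>
definition logit_ps :: "nat \<Rightarrow> (nat \<Rightarrow> 'b \<Rightarrow> real) \<Rightarrow> (nat \<Rightarrow> real) \<Rightarrow> 'b \<Rightarrow> real" where
  "logit_ps p f \<gamma> x = 1 / (1 + exp (- (\<Sum>j\<le>p. \<gamma> j * f j x)))"

definition ipw_est :: "nat \<Rightarrow> (nat \<Rightarrow> 'b \<Rightarrow> real) \<Rightarrow> (nat \<Rightarrow> real) \<Rightarrow> nat \<Rightarrow>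
    (nat \<Rightarrow> 'a \<Rightarrow> real) \<Rightarrow> (nat \<Rightarrow> 'a \<Rightarrow> 'b) \<Rightarrow> (nat \<Rightarrow> 'a \<Rightarrow> real) \<Rightarrow> 'a \<Rightarrow> real" where
  "ipw_est p f \<gamma> n Tc Xc Yc \<omega> =
     (1 / real n) * (\<Sum>i<n. Tc i \<omega> * Yc i \<omega> / logit_ps p f \<gamma> (Xc i \<omega>))"

definition cond_indep_given :: "'a measure \<Rightarrow> 'b measure \<Rightarrow> ('a \<Rightarrow> 'b) \<Rightarrow> ('a \<Rightarrow> real) \<Rightarrow> ('a \<Rightarrow> real) \<Rightarrow> bool" where
  "cond_indep_given M N X T Y \<longleftrightarrow>
     (\<forall>A \<in> sets borel. \<forall>B \<in> sets borel. AE \<omega> in M.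
        real_cond_exp M (sigmaX M N X) (indicator {w \<in> space M. T w \<in> A \<and> Y w \<in> B}) \<omega>
        = real_cond_exp M (sigmaX M N X) (indicator {w \<in> space M. T w \<in> A}) \<omega>
          * real_cond_exp M (sigmaX M N X) (indicator {w \<in> space M. Y w \<in> B}) \<omega>)"

definition pistar :: "'a measure \<Rightarrow> 'b measure \<Rightarrow> ('a \<Rightarrow> 'b) \<Rightarrow> ('a \<Rightarrow> real) \<Rightarrow> 'a \<Rightarrow> real" where
  "pistar M N X T = real_cond_exp M (sigmaX M N X) (indicator {w \<in> space M. T w = 1})"

definition msre :: "'a measure \<Rightarrow> 'b measure \<Rightarrow> ('a \<Rightarrow> 'b) \<Rightarrow> ('a \<Rightarrow> real) \<Rightarrow> nat \<Rightarrow>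
    (nat \<Rightarrow> 'b \<Rightarrow> real) \<Rightarrow> (nat \<Rightarrow> real) \<Rightarrow> ennreal" where
  "msre M N X T p f \<gamma> =
     (\<integral>\<^sup>+ \<omega>. ennreal ((pistar M N X T \<omega> / logit_ps p f \<gamma> (X \<omega>) - 1)\<^sup>2) \<partial>M)"

end

theory Submission
  imports Defs
begin

text \<open>
  Unconfoundedness makes the joint law of (X, Y) weighted by T coincide with the one weighted
  by the propensity \<pi>*(X), i.e. E[T \<phi>(X, Y)] = E[\<pi>*(X) \<phi>(X, Y)] for every \<phi>.  For a single
  IPW term Z = T Y / \<pi>(X) this gives E Z - E Y = E[(\<pi>*/\<pi> - 1) Y], whose square is at most
  c MSRE by Cauchy-Schwarz, and E Z^2 = E[\<pi>* E(Y^2 | X) / \<pi>^2] \<le> c E[\<pi>*/\<pi>^2] \<le> 2c (1 + MSRE) / \<delta>,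
  because \<pi>*/\<pi>^2 = (\<pi>*/\<pi>)^2 / \<pi>* and r^2 \<le> 2 (r - 1)^2 + 2.  The estimator is the mean of n
  i.i.d. copies of Z, so its mean squared error is (E Z - E Y)^2 + Var Z / n.
\<close>

lemma integrable_mult_of_square_integrable:
  fixes u v :: "'a \<Rightarrow> real"
  assumes [measurable]: "u \<in> borel_measurable M" "v \<in> borel_measurable M"
    and "integrable M (\<lambda>x. (u x)\<^sup>2)" "integrable M (\<lambda>x. (v x)\<^sup>2)"
  shows "integrable M (\<lambda>x. u x * v x)"
proof (rule Bochner_Integration.integrable_bound)
  show "integrable M (\<lambda>x. (u x)\<^sup>2 + (v x)\<^sup>2)"
    using assms(3,4) by simp
  have "\<bar>u x * v x\<bar> \<le> (u x)\<^sup>2 + (v x)\<^sup>2" for x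
  proof -
    have "0 \<le> (\<bar>u x\<bar> - \<bar>v x\<bar>)\<^sup>2" by simp
    then have "2 * (\<bar>u x\<bar> * \<bar>v x\<bar>) \<le> (u x)\<^sup>2 + (v x)\<^sup>2"
      by (simp add: power2_diff)
    moreover have "0 \<le> \<bar>u x\<bar> * \<bar>v x\<bar>" by simp
    ultimately show ?thesis
      unfolding abs_mult by linarith
  qed
  then show "AE x in M. norm (u x * v x) \<le> norm ((u x)\<^sup>2 + (v x)\<^sup>2)"
    by simp
qed simp

lemma integrable_square_sum:
  fixes Z :: "'i \<Rightarrow> 'a \<Rightarrow> real"
  assumes [measurable]: "\<And>i. i \<in> I \<Longrightarrow> Z i \<in> borel_measurable M"
    and "\<And>i. i \<in> I \<Longrightarrow> integrable M (\<lambda>x. (Z i x)\<^sup>2)"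
  shows "integrable M (\<lambda>x. (\<Sum>i\<in>I. Z i x)\<^sup>2)"
  unfolding power2_eq_square sum_product
  using assms by (intro Bochner_Integration.integrable_sum integrable_mult_of_square_integrable) auto

lemma Cauchy_Schwarz_integral:
  fixes u v :: "'a \<Rightarrow> real"
  assumes [measurable]: "u \<in> borel_measurable M" "v \<in> borel_measurable M"
    and u2: "integrable M (\<lambda>x. (u x)\<^sup>2)" and v2: "integrable M (\<lambda>x. (v x)\<^sup>2)"
  shows "(\<integral>x. u x * v x \<partial>M)\<^sup>2 \<le> (\<integral>x. (u x)\<^sup>2 \<partial>M) * (\<integral>x. (v x)\<^sup>2 \<partial>M)"
proof -
  have uv: "integrable M (\<lambda>x. \<bar>u x\<bar> * \<bar>v x\<bar>)"
    using integrable_abs[OF integrable_mult_of_square_integrable[OF assms]] by (simp add: abs_mult)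
  have nn_sq: "(\<integral>\<^sup>+x. (ennreal \<bar>w x\<bar>)\<^sup>2 \<partial>M) = ennreal (\<integral>x. (w x)\<^sup>2 \<partial>M)"
    if "integrable M (\<lambda>x. (w x)\<^sup>2)" for w :: "'a \<Rightarrow> real"
    using that by (subst nn_integral_eq_integral[symmetric])
      (auto simp: ennreal_power intro!: nn_integral_cong)
  have "\<bar>\<integral>x. u x * v x \<partial>M\<bar> \<le> (\<integral>x. \<bar>u x\<bar> * \<bar>v x\<bar> \<partial>M)"
    using integral_abs_bound[of M "\<lambda>x. u x * v x"] by (simp add: abs_mult)
  then have "\<bar>\<integral>x. u x * v x \<partial>M\<bar>\<^sup>2 \<le> (\<integral>x. \<bar>u x\<bar> * \<bar>v x\<bar> \<partial>M)\<^sup>2"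
    by (rule power_mono) simp
  then have "(\<integral>x. u x * v x \<partial>M)\<^sup>2 \<le> (\<integral>x. \<bar>u x\<bar> * \<bar>v x\<bar> \<partial>M)\<^sup>2"
    by simp
  also have "\<dots> \<le> (\<integral>x. (u x)\<^sup>2 \<partial>M) * (\<integral>x. (v x)\<^sup>2 \<partial>M)"
  proof -
    have "(\<integral>\<^sup>+x. ennreal \<bar>u x\<bar> * ennreal \<bar>v x\<bar> \<partial>M) = ennreal (\<integral>x. \<bar>u x\<bar> * \<bar>v x\<bar> \<partial>M)"
      using uv by (subst nn_integral_eq_integral[symmetric])
        (auto simp: ennreal_mult intro!: nn_integral_cong)
    then have "ennreal ((\<integral>x. \<bar>u x\<bar> * \<bar>v x\<bar> \<partial>M)\<^sup>2)
        = (\<integral>\<^sup>+x. ennreal \<bar>u x\<bar> * ennreal \<bar>v x\<bar> \<partial>M)\<^sup>2"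
      using integral_nonneg_AE[of "\<lambda>x. \<bar>u x\<bar> * \<bar>v x\<bar>" M] by (simp add: ennreal_power)
    also have "\<dots> \<le> ennreal (\<integral>x. (u x)\<^sup>2 \<partial>M) * ennreal (\<integral>x. (v x)\<^sup>2 \<partial>M)"
      using Cauchy_Schwarz_nn_integral[of "\<lambda>x. ennreal \<bar>u x\<bar>" M "\<lambda>x. ennreal \<bar>v x\<bar>"]
      by (simp only: nn_sq[OF u2] nn_sq[OF v2]) simp
    also have "\<dots> = ennreal ((\<integral>x. (u x)\<^sup>2 \<partial>M) * (\<integral>x. (v x)\<^sup>2 \<partial>M))"
      by (simp add: ennreal_mult)
    finally show ?thesis
      by (simp add: ennreal_le_iff)
  qed
  finally show ?thesis .
qed

context prob_space
begin

lemma variance_sum_indep: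
  fixes Z :: "'i \<Rightarrow> 'a \<Rightarrow> real"
  assumes "finite I" and indep: "indep_vars (\<lambda>_. borel) Z I"
    and sq: "\<And>i. i \<in> I \<Longrightarrow> integrable M (\<lambda>x. (Z i x)\<^sup>2)"
  shows "variance (\<lambda>x. \<Sum>i\<in>I. Z i x) = (\<Sum>i\<in>I. variance (Z i))"
proof -
  have Z_meas [measurable]: "i \<in> I \<Longrightarrow> Z i \<in> borel_measurable M" for i
    using indep by (auto simp: indep_vars_def)
  have Z_int: "i \<in> I \<Longrightarrow> integrable M (Z i)" for i
    using square_integrable_imp_integrable[OF Z_meas sq] .
  define W where "W i x = Z i x - expectation (Z i)" for i x
  have W_meas [measurable]: "i \<in> I \<Longrightarrow> W i \<in> borel_measurable M" for i
    unfolding W_def by measurable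
  have W_int: "i \<in> I \<Longrightarrow> integrable M (W i)" for i
    using Z_int unfolding W_def by auto
  have W_sq: "i \<in> I \<Longrightarrow> integrable M (\<lambda>x. (W i x)\<^sup>2)" for i
    using Z_int sq unfolding W_def by (simp add: power2_diff)
  have W_mean: "i \<in> I \<Longrightarrow> expectation (W i) = 0" for i
    using Z_int unfolding W_def by (simp add: prob_space)
  have W_indep: "indep_vars (\<lambda>_. borel) W I"
    unfolding W_def by (rule indep_vars_compose2[OF indep]) measurable
  have W_uncorrelated: "expectation (\<lambda>x. W i x * W j x) = 0"
    if "i \<in> I" "j \<in> I" "i \<noteq> j" for i j
  proof -
    have "indep_vars (\<lambda>_. borel) W {i, j}"
      using that by (intro indep_vars_subset[OF W_indep]) auto
    then have "expectation (\<lambda>x. \<Prod>k\<in>{i, j}. W k x) = (\<Prod>k\<in>{i, j}. expectation (W k))"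
      using that by (intro indep_vars_lebesgue_integral) (auto intro: W_int)
    then show ?thesis
      using that W_mean by simp
  qed
  have centered: "(\<Sum>i\<in>I. Z i x) - expectation (\<lambda>x. \<Sum>i\<in>I. Z i x) = (\<Sum>i\<in>I. W i x)" for x
    using Z_int by (simp add: W_def sum_subtractf)
  have "variance (\<lambda>x. \<Sum>i\<in>I. Z i x) = expectation (\<lambda>x. (\<Sum>i\<in>I. W i x)\<^sup>2)"
    by (simp only: centered)
  also have "\<dots> = expectation (\<lambda>x. \<Sum>i\<in>I. \<Sum>j\<in>I. W i x * W j x)"
    by (simp add: power2_eq_square sum_product)
  also have "\<dots> = (\<Sum>i\<in>I. \<Sum>j\<in>I. expectation (\<lambda>x. W i x * W j x))"
    using W_sq by (simp add: integrable_mult_of_square_integrable Bochner_Integration.integrable_sum)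
  also have "\<dots> = (\<Sum>i\<in>I. expectation (\<lambda>x. (W i x)\<^sup>2))"
  proof (rule sum.cong [OF refl])
    fix i assume "i \<in> I"
    then have "(\<Sum>j\<in>I. expectation (\<lambda>x. W i x * W j x))
        = (\<Sum>j\<in>I. if j = i then expectation (\<lambda>x. (W i x)\<^sup>2) else 0)"
      using W_uncorrelated by (intro sum.cong) (auto simp: power2_eq_square)
    then show "(\<Sum>j\<in>I. expectation (\<lambda>x. W i x * W j x)) = expectation (\<lambda>x. (W i x)\<^sup>2)"
      using \<open>i \<in> I\<close> \<open>finite I\<close> by simp
  qed
  finally show ?thesis
    by (simp add: W_def)
qed

lemma nn_integral_square_deviation:
  fixes Z :: "'a \<Rightarrow> real"
  assumes [measurable]: "Z \<in> borel_measurable M" and sq: "integrable M (\<lambda>x. (Z x)\<^sup>2)"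
  shows "(\<integral>\<^sup>+x. ennreal ((Z x - \<theta>)\<^sup>2) \<partial>M) = ennreal (variance Z + (expectation Z - \<theta>)\<^sup>2)"
proof -
  have Z: "integrable M Z"
    using square_integrable_imp_integrable[OF _ sq] by simp
  then have "integrable M (\<lambda>x. (Z x - \<theta>)\<^sup>2)"
    using sq by (simp add: power2_diff)
  then have "(\<integral>\<^sup>+x. ennreal ((Z x - \<theta>)\<^sup>2) \<partial>M) = ennreal (expectation (\<lambda>x. (Z x - \<theta>)\<^sup>2))"
    by (simp add: nn_integral_eq_integral)
  also have "expectation (\<lambda>x. (Z x - \<theta>)\<^sup>2) = variance Z + (expectation Z - \<theta>)\<^sup>2"
    using Z sq variance_eq[of Z] by (simp add: power2_diff prob_space algebra_simps)
  finally show ?thesis .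
qed

lemma nn_integral_square_deviation_sample_mean:
  fixes Z :: "nat \<Rightarrow> 'a \<Rightarrow> real"
  assumes indep: "indep_vars (\<lambda>_. borel) Z {..<n}" and "0 < n"
    and sq: "\<And>i. i < n \<Longrightarrow> integrable M (\<lambda>x. (Z i x)\<^sup>2)"
    and mean: "\<And>i. i < n \<Longrightarrow> expectation (Z i) = \<mu>"
    and var: "\<And>i. i < n \<Longrightarrow> variance (Z i) = v"
  shows "(\<integral>\<^sup>+x. ennreal ((1 / real n * (\<Sum>i<n. Z i x) - \<theta>)\<^sup>2) \<partial>M) = ennreal (v / real n + (\<mu> - \<theta>)\<^sup>2)"
proof -
  have [measurable]: "i < n \<Longrightarrow> Z i \<in> borel_measurable M" for i
    using indep by (auto simp: indep_vars_def)
  define S where "S x = (\<Sum>i<n. Z i x)" for x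
  have S_sq: "integrable M (\<lambda>x. (S x)\<^sup>2)"
    unfolding S_def using sq by (intro integrable_square_sum) auto
  have S_int: "integrable M S"
    using square_integrable_imp_integrable[OF _ S_sq] unfolding S_def by simp
  have S_mean: "expectation S = real n * \<mu>"
    unfolding S_def using sq mean by (simp add: square_integrable_imp_integrable)
  have S_var: "variance S = real n * v"
    unfolding S_def using variance_sum_indep[OF _ indep sq] var by simp
  have "(\<integral>\<^sup>+x. ennreal ((1 / real n * S x - \<theta>)\<^sup>2) \<partial>M)
      = ennreal (variance (\<lambda>x. 1 / real n * S x) + (expectation (\<lambda>x. 1 / real n * S x) - \<theta>)\<^sup>2)"
    using S_sq by (intro nn_integral_square_deviation) (simp_all add: S_def power_divide)
  also have "variance (\<lambda>x. 1 / real n * S x) = variance S / (real n)\<^sup>2"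
  proof -
    have "(1 / real n * S x - expectation (\<lambda>x. 1 / real n * S x))\<^sup>2 = (S x - expectation S)\<^sup>2 / (real n)\<^sup>2" for x
      by (simp add: power_divide flip: diff_divide_distrib)
    then show ?thesis
      by simp
  qed
  also have "variance S / (real n)\<^sup>2 = v / real n"
    unfolding S_var using \<open>0 < n\<close> by (simp add: power2_eq_square)
  also have "expectation (\<lambda>x. 1 / real n * S x) = \<mu>"
    using \<open>0 < n\<close> by (simp add: S_mean)
  finally show ?thesis
    unfolding S_def .
qed

lemma nn_integral_square_deviation_sample_mean_iid_le:
  fixes U :: "nat \<Rightarrow> 'a \<Rightarrow> 'k" and V :: "'a \<Rightarrow> 'k" and \<psi> :: "'k \<Rightarrow> real"
  assumes indep: "indep_vars (\<lambda>_. K) U {..<n}"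
    and ident: "\<And>i. i < n \<Longrightarrow> distr M K (U i) = distr M K V"
    and [measurable]: "V \<in> M \<rightarrow>\<^sub>M K" "\<psi> \<in> borel_measurable K" and "0 < n"
  shows "(\<integral>\<^sup>+x. ennreal ((1 / real n * (\<Sum>i<n. \<psi> (U i x)) - \<theta>)\<^sup>2) \<partial>M)
    \<le> ennreal ((expectation (\<lambda>x. \<psi> (V x)) - \<theta>)\<^sup>2) + ennreal (1 / real n) * (\<integral>\<^sup>+x. ennreal ((\<psi> (V x))\<^sup>2) \<partial>M)"
proof (cases "(\<integral>\<^sup>+x. ennreal ((\<psi> (V x))\<^sup>2) \<partial>M) = \<infinity>")
  case True
  then show ?thesis
    using \<open>0 < n\<close> by (simp add: ennreal_mult_top)
next
  case False
  then have sq: "integrable M (\<lambda>x. (\<psi> (V x))\<^sup>2)"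
    by (intro integrableI_bounded) (auto simp: top.not_eq_extremum)
  have [measurable]: "i < n \<Longrightarrow> U i \<in> M \<rightarrow>\<^sub>M K" for i
    using indep by (auto simp: indep_vars_def)
  have same_law: "(\<integral>x. h (U i x) \<partial>M) = (\<integral>x. h (V x) \<partial>M)
      \<and> (integrable M (\<lambda>x. h (U i x)) \<longleftrightarrow> integrable M (\<lambda>x. h (V x)))"
    if "i < n" and [measurable]: "h \<in> borel_measurable K" for i and h :: "'k \<Rightarrow> real"
    using ident[OF \<open>i < n\<close>] integral_distr[of "U i" M K h] integral_distr[of V M K h]
      integrable_distr_eq[of "U i" M K h] integrable_distr_eq[of V M K h] \<open>i < n\<close>
    by simp
  let ?\<mu> = "expectation (\<lambda>x. \<psi> (V x))"
  have "(\<integral>\<^sup>+x. ennreal ((1 / real n * (\<Sum>i<n. \<psi> (U i x)) - \<theta>)\<^sup>2) \<partial>M)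
      = ennreal (variance (\<lambda>x. \<psi> (V x)) / real n + (?\<mu> - \<theta>)\<^sup>2)"
  proof (rule nn_integral_square_deviation_sample_mean)
    show "indep_vars (\<lambda>_. borel) (\<lambda>i x. \<psi> (U i x)) {..<n}"
      by (rule indep_vars_compose2[OF indep]) measurable
    fix i assume "i < n"
    then show "integrable M (\<lambda>x. (\<psi> (U i x))\<^sup>2)" "expectation (\<lambda>x. \<psi> (U i x)) = ?\<mu>"
      "variance (\<lambda>x. \<psi> (U i x)) = variance (\<lambda>x. \<psi> (V x))"
      using same_law[of i "\<lambda>k. (\<psi> k)\<^sup>2"] same_law[of i \<psi>]
        same_law[of i "\<lambda>k. (\<psi> k - ?\<mu>)\<^sup>2"] sq
      by simp_all
  qed fact
  also have "\<dots> \<le> ennreal (expectation (\<lambda>x. (\<psi> (V x))\<^sup>2) / real n + (?\<mu> - \<theta>)\<^sup>2)"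
    using variance_eq[OF square_integrable_imp_integrable[OF _ sq] sq] variance_positive
    by (intro ennreal_leI add_right_mono divide_right_mono) simp_all
  also have "\<dots> = ennreal ((?\<mu> - \<theta>)\<^sup>2) + ennreal (1 / real n) * (\<integral>\<^sup>+x. ennreal ((\<psi> (V x))\<^sup>2) \<partial>M)"
    using sq by (simp add: nn_integral_eq_integral ennreal_plus ennreal_mult[symmetric] add.commute)
  finally show ?thesis .
qed

end

lemma measure_eqI_pair_rectangles:
  assumes sets: "sets \<mu> = sets (A \<Otimes>\<^sub>M B)" "sets \<nu> = sets (A \<Otimes>\<^sub>M B)"
    and finite: "emeasure \<mu> (space A \<times> space B) \<noteq> \<infinity>"
    and rect: "\<And>a b. a \<in> sets A \<Longrightarrow> b \<in> sets B \<Longrightarrow> emeasure \<mu> (a \<times> b) = emeasure \<nu> (a \<times> b)"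
  shows "\<mu> = \<nu>"
proof (rule measure_eqI_generator_eq_countable[OF Int_stable_pair_measure_generator[of A B]])
  show "{a \<times> b |a b. a \<in> sets A \<and> b \<in> sets B} \<subseteq> Pow (space A \<times> space B)"
    by (auto dest: sets.sets_into_space)
  show "sets \<mu> = sigma_sets (space A \<times> space B) {a \<times> b |a b. a \<in> sets A \<and> b \<in> sets B}"
    "sets \<nu> = sigma_sets (space A \<times> space B) {a \<times> b |a b. a \<in> sets A \<and> b \<in> sets B}"
    using sets by (simp_all add: sets_pair_measure)
  show "{space A \<times> space B} \<subseteq> {a \<times> b |a b. a \<in> sets A \<and> b \<in> sets B}"
    by blast
  show "\<And>X. X \<in> {a \<times> b |a b. a \<in> sets A \<and> b \<in> sets B} \<Longrightarrow> emeasure \<mu> X = emeasure \<nu> X"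
    using rect by blast
qed (use finite in simp_all)

lemma (in sigma_finite_subalgebra) nn_cond_exp_eq_real_cond_exp:
  fixes f :: "'a \<Rightarrow> real"
  assumes f: "integrable M f" and nonneg: "\<And>x. 0 \<le> f x"
  shows "AE x in M. nn_cond_exp M F (\<lambda>x. ennreal (f x)) x = ennreal (real_cond_exp M F f x)"
proof -
  have [measurable]: "f \<in> borel_measurable M"
    using f by simp
  have "(\<lambda>x. ennreal (- f x)) = (\<lambda>x. 0)"
    using nonneg by (simp add: ennreal_neg)
  moreover have "AE x in M. nn_cond_exp M F (\<lambda>x. 0) x = 0"
    using nn_cond_exp_F_meas[of "\<lambda>x. 0"] by simp
  ultimately have negative_part: "AE x in M. nn_cond_exp M F (\<lambda>x. ennreal (- f x)) x = 0"
    by simp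
  have "(\<integral>\<^sup>+x. nn_cond_exp M F (\<lambda>x. ennreal (f x)) x \<partial>M) = (\<integral>\<^sup>+x. ennreal (f x) \<partial>M)"
    using nn_cond_exp_intg[of "\<lambda>x. 1" "\<lambda>x. ennreal (f x)"] by simp
  also have "\<dots> < \<infinity>"
    using f nonneg by (simp add: nn_integral_eq_integral)
  finally have "AE x in M. nn_cond_exp M F (\<lambda>x. ennreal (f x)) x \<noteq> \<infinity>"
    by (intro nn_integral_PInf_AE) auto
  with negative_part show ?thesis
    unfolding real_cond_exp_def by eventually_elim (simp add: ennreal_enn2real_if)
qed

lemma ratio_div_square_le:
  fixes q e \<delta> :: real
  assumes "0 < \<delta>" "\<delta> \<le> q" "0 < e"
  shows "q / e\<^sup>2 \<le> 2 / \<delta> * ((q / e - 1)\<^sup>2 + 1)"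
proof -
  have "q / e\<^sup>2 = (q / e)\<^sup>2 / q"
    using assms by (simp add: power2_eq_square)
  also have "\<dots> \<le> (q / e)\<^sup>2 / \<delta>"
    using assms by (intro divide_left_mono) auto
  also have "\<dots> \<le> 2 * ((q / e - 1)\<^sup>2 + 1) / \<delta>"
  proof (intro divide_right_mono)
    have "2 * ((q / e - 1)\<^sup>2 + 1) - (q / e)\<^sup>2 = (q / e - 2)\<^sup>2"
      by (simp add: power2_eq_square algebra_simps)
    then show "(q / e)\<^sup>2 \<le> 2 * ((q / e - 1)\<^sup>2 + 1)"
      using zero_le_power2[of "q / e - 2"] by linarith
  qed (use assms in simp)
  finally show ?thesis
    by simp
qed

locale unconfounded_treatment = prob_space M
  for M :: "'a measure" +
  fixes N :: "'b measure" and X :: "'a \<Rightarrow> 'b" and T Y :: "'a \<Rightarrow> real"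
  assumes X_measurable [measurable]: "X \<in> M \<rightarrow>\<^sub>M N"
    and T_measurable [measurable]: "T \<in> borel_measurable M"
    and Y_measurable [measurable]: "Y \<in> borel_measurable M"
    and T_binary: "\<forall>\<omega>\<in>space M. T \<omega> \<in> {0, 1}"
    and unconfounded: "cond_indep_given M N X T Y"
begin

lemma subalgebra_sigmaX: "subalgebra M (sigmaX M N X)"
  using measurable_space[OF X_measurable] measurable_sets[OF X_measurable]
  by (auto simp: subalgebra_def sigmaX_def sets_vimage_algebra2)

lemma X_measurable_sigmaX [measurable]: "X \<in> sigmaX M N X \<rightarrow>\<^sub>M N"
  unfolding sigmaX_def using measurable_space[OF X_measurable]
  by (intro measurable_vimage_algebra1) auto

end

sublocale unconfounded_treatment \<subseteq> finite_measure_subalgebra M "sigmaX M N X"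
  by unfold_locales (rule subalgebra_sigmaX)

context unconfounded_treatment
begin

abbreviation propensity :: "'a \<Rightarrow> real" where
  "propensity \<equiv> pistar M N X T"

lemma propensity_measurable_sigmaX [measurable]: "propensity \<in> borel_measurable (sigmaX M N X)"
  unfolding pistar_def by simp

lemma propensity_measurable [measurable]: "propensity \<in> borel_measurable M"
  unfolding pistar_def by simp

lemma integrable_propensity: "integrable M propensity"
  unfolding pistar_def by (intro real_cond_exp_int(1) integrable_const_bound[where B=1]) auto

lemma propensity_nonneg: "AE \<omega> in M. 0 \<le> propensity \<omega>"
  unfolding pistar_def by (intro real_cond_exp_pos) auto

lemma T_nonneg: "\<omega> \<in> space M \<Longrightarrow> 0 \<le> T \<omega>"
  using T_binary by auto

lemma integrable_T: "integrable M T"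
  using T_binary by (intro integrable_const_bound[where B=1] AE_I2) auto

lemma integral_T_rectangle:
  assumes [measurable]: "A \<in> sets N" "B \<in> sets borel"
  shows "(\<integral>\<omega>. T \<omega> * (indicator A (X \<omega>) * indicator B (Y \<omega>)) \<partial>M)
       = (\<integral>\<omega>. propensity \<omega> * (indicator A (X \<omega>) * indicator B (Y \<omega>)) \<partial>M)"
proof -
  let ?cond = "real_cond_exp M (sigmaX M N X)"
  let ?TY = "indicator {\<omega> \<in> space M. T \<omega> \<in> {1} \<and> Y \<omega> \<in> B} :: 'a \<Rightarrow> real"
  let ?Y = "indicator {\<omega> \<in> space M. Y \<omega> \<in> B} :: 'a \<Rightarrow> real"
  let ?a = "\<lambda>\<omega>. indicator A (X \<omega>) :: real"
  have factorization: "AE \<omega> in M. ?cond ?TY \<omega> = propensity \<omega> * ?cond ?Y \<omega>"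
    using unconfounded[unfolded cond_indep_given_def, rule_format, of "{1}" B]
    by (simp add: pistar_def)
  have "(\<integral>\<omega>. T \<omega> * (?a \<omega> * indicator B (Y \<omega>)) \<partial>M) = (\<integral>\<omega>. ?a \<omega> * ?TY \<omega> \<partial>M)"
    using T_binary by (intro Bochner_Integration.integral_cong) (auto simp: indicator_def)
  also have "\<dots> = (\<integral>\<omega>. ?a \<omega> * ?cond ?TY \<omega> \<partial>M)"
    by (rule real_cond_exp_intg(2)[symmetric])
       (auto intro!: integrable_const_bound[where B=1] simp: indicator_def)
  also have "\<dots> = (\<integral>\<omega>. (?a \<omega> * propensity \<omega>) * ?cond ?Y \<omega> \<partial>M)"
    using factorization by (intro integral_cong_AE) auto
  also have "\<dots> = (\<integral>\<omega>. (?a \<omega> * propensity \<omega>) * ?Y \<omega> \<partial>M)"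
  proof (rule real_cond_exp_intg(2))
    show "integrable M (\<lambda>\<omega>. ?a \<omega> * propensity \<omega> * ?Y \<omega>)"
      by (rule Bochner_Integration.integrable_bound[OF integrable_propensity])
        (auto simp: indicator_def)
  qed auto
  also have "\<dots> = (\<integral>\<omega>. propensity \<omega> * (?a \<omega> * indicator B (Y \<omega>)) \<partial>M)"
    by (intro Bochner_Integration.integral_cong) (auto simp: indicator_def)
  finally show ?thesis .
qed

lemma distr_density_T_eq_propensity:
  "distr (density M (\<lambda>\<omega>. ennreal (T \<omega>))) (N \<Otimes>\<^sub>M borel) (\<lambda>\<omega>. (X \<omega>, Y \<omega>))
    = distr (density M (\<lambda>\<omega>. ennreal (propensity \<omega>))) (N \<Otimes>\<^sub>M borel) (\<lambda>\<omega>. (X \<omega>, Y \<omega>))"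
proof (rule measure_eqI_pair_rectangles)
  have rectangle: "emeasure (distr (density M (\<lambda>\<omega>. ennreal (h \<omega>))) (N \<Otimes>\<^sub>M borel) (\<lambda>\<omega>. (X \<omega>, Y \<omega>))) (A \<times> B)
      = ennreal (\<integral>\<omega>. h \<omega> * (indicator A (X \<omega>) * indicator B (Y \<omega>)) \<partial>M)"
    if [measurable]: "h \<in> borel_measurable M" "A \<in> sets N" "B \<in> sets borel"
      and h: "integrable M h" "AE \<omega> in M. 0 \<le> h \<omega>" for h A B
  proof -
    have "emeasure (distr (density M (\<lambda>\<omega>. ennreal (h \<omega>))) (N \<Otimes>\<^sub>M borel) (\<lambda>\<omega>. (X \<omega>, Y \<omega>))) (A \<times> B)
        = (\<integral>\<^sup>+\<omega>. ennreal (h \<omega>) * indicator ((\<lambda>\<omega>. (X \<omega>, Y \<omega>)) -` (A \<times> B) \<inter> space M) \<omega> \<partial>M)"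
      by (subst emeasure_distr) (auto intro!: emeasure_density)
    also have "\<dots> = (\<integral>\<^sup>+\<omega>. ennreal (h \<omega> * (indicator A (X \<omega>) * indicator B (Y \<omega>))) \<partial>M)"
      by (intro nn_integral_cong) (auto simp: indicator_def)
    also have "\<dots> = ennreal (\<integral>\<omega>. h \<omega> * (indicator A (X \<omega>) * indicator B (Y \<omega>)) \<partial>M)"
      using h by (intro nn_integral_eq_integral Bochner_Integration.integrable_bound[OF h(1)])
        (auto simp: indicator_def elim!: eventually_mono)
    finally show ?thesis .
  qed
  have T: "integrable M T" "AE \<omega> in M. 0 \<le> T \<omega>"
    using integrable_T T_nonneg by auto
  show "emeasure (distr (density M (\<lambda>\<omega>. ennreal (T \<omega>))) (N \<Otimes>\<^sub>M borel) (\<lambda>\<omega>. (X \<omega>, Y \<omega>))) (a \<times> b)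
      = emeasure (distr (density M (\<lambda>\<omega>. ennreal (propensity \<omega>))) (N \<Otimes>\<^sub>M borel) (\<lambda>\<omega>. (X \<omega>, Y \<omega>))) (a \<times> b)"
    if "a \<in> sets N" "b \<in> sets borel" for a b
    using rectangle[OF T_measurable that T]
      rectangle[OF propensity_measurable that integrable_propensity propensity_nonneg]
      integral_T_rectangle[OF that] by simp
  show "emeasure (distr (density M (\<lambda>\<omega>. ennreal (T \<omega>))) (N \<Otimes>\<^sub>M borel) (\<lambda>\<omega>. (X \<omega>, Y \<omega>)))
      (space N \<times> space borel) \<noteq> \<infinity>"
    using rectangle[OF T_measurable sets.top sets.top T] by simp
qed simp_all

lemma nn_integral_T_eq_propensity:
  assumes [measurable]: "\<phi> \<in> borel_measurable (N \<Otimes>\<^sub>M borel)"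
  shows "(\<integral>\<^sup>+\<omega>. ennreal (T \<omega>) * \<phi> (X \<omega>, Y \<omega>) \<partial>M)
       = (\<integral>\<^sup>+\<omega>. ennreal (propensity \<omega>) * \<phi> (X \<omega>, Y \<omega>) \<partial>M)"
  using arg_cong[OF distr_density_T_eq_propensity, of "\<lambda>\<mu>. integral\<^sup>N \<mu> \<phi>"]
  by (simp add: nn_integral_distr nn_integral_density)

lemma integral_T_eq_propensity:
  fixes \<phi> :: "'b \<times> real \<Rightarrow> real"
  assumes [measurable]: "\<phi> \<in> borel_measurable (N \<Otimes>\<^sub>M borel)"
  shows "(\<integral>\<omega>. T \<omega> * \<phi> (X \<omega>, Y \<omega>) \<partial>M) = (\<integral>\<omega>. propensity \<omega> * \<phi> (X \<omega>, Y \<omega>) \<partial>M)"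
  using arg_cong[OF distr_density_T_eq_propensity, of "\<lambda>\<mu>. integral\<^sup>L \<mu> \<phi>"]
    T_nonneg propensity_nonneg
  by (simp add: integral_distr integral_density)

lemma expectation_le_of_cond_exp_le:
  assumes f: "integrable M f" and bound: "AE \<omega> in M. real_cond_exp M (sigmaX M N X) f \<omega> \<le> c"
  shows "expectation f \<le> c"
proof -
  have "expectation f = expectation (real_cond_exp M (sigmaX M N X) f)"
    using real_cond_exp_int(2)[OF f] by simp
  also have "\<dots> \<le> expectation (\<lambda>\<omega>. c)"
    using bound by (intro integral_mono_AE real_cond_exp_int(1)[OF f]) auto
  finally show ?thesis
    by (simp add: prob_space)
qed

lemma ipw_bias_le:
  assumes [measurable]: "e \<in> borel_measurable N" and e_pos: "\<And>x. 0 < e x"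
    and Y_sq: "integrable M (\<lambda>\<omega>. (Y \<omega>)\<^sup>2)" and "0 < c"
    and cond_moment: "AE \<omega> in M. real_cond_exp M (sigmaX M N X) (\<lambda>\<omega>. (Y \<omega>)\<^sup>2) \<omega> \<le> c"
  shows "ennreal ((expectation (\<lambda>\<omega>. T \<omega> * Y \<omega> / e (X \<omega>)) - expectation Y)\<^sup>2)
      \<le> ennreal c * (\<integral>\<^sup>+\<omega>. ennreal ((propensity \<omega> / e (X \<omega>) - 1)\<^sup>2) \<partial>M)"
proof (cases "(\<integral>\<^sup>+\<omega>. ennreal ((propensity \<omega> / e (X \<omega>) - 1)\<^sup>2) \<partial>M) = \<infinity>")
  case True
  then show ?thesis
    using \<open>0 < c\<close> by (simp add: ennreal_mult_top)
next
  case False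
  let ?r = "\<lambda>\<omega>. propensity \<omega> / e (X \<omega>) - 1"
  obtain m where m: "(\<integral>\<^sup>+\<omega>. ennreal ((?r \<omega>)\<^sup>2) \<partial>M) = ennreal m" "0 \<le> m"
    using False by (cases "\<integral>\<^sup>+\<omega>. ennreal ((?r \<omega>)\<^sup>2) \<partial>M") auto
  have r_sq: "integrable M (\<lambda>\<omega>. (?r \<omega>)\<^sup>2)" and r_sq_mean: "expectation (\<lambda>\<omega>. (?r \<omega>)\<^sup>2) = m"
    using m by (auto simp: integrableI_nn_integral_finite integral_eq_nn_integral)
  have Y: "integrable M Y"
    using square_integrable_imp_integrable[OF Y_measurable Y_sq] .
  have "expectation (\<lambda>\<omega>. T \<omega> * Y \<omega> / e (X \<omega>)) = expectation (\<lambda>\<omega>. propensity \<omega> * (Y \<omega> / e (X \<omega>)))"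
    using integral_T_eq_propensity[of "\<lambda>(x, y). y / e x"] by simp
  also have "\<dots> = expectation (\<lambda>\<omega>. ?r \<omega> * Y \<omega> + Y \<omega>)"
    using e_pos by (intro Bochner_Integration.integral_cong) (auto simp: field_simps less_imp_neq[symmetric])
  also have "\<dots> = expectation (\<lambda>\<omega>. ?r \<omega> * Y \<omega>) + expectation Y"
    using r_sq Y_sq Y by (simp add: integrable_mult_of_square_integrable)
  finally have "(expectation (\<lambda>\<omega>. T \<omega> * Y \<omega> / e (X \<omega>)) - expectation Y)\<^sup>2
      \<le> expectation (\<lambda>\<omega>. (?r \<omega>)\<^sup>2) * expectation (\<lambda>\<omega>. (Y \<omega>)\<^sup>2)"
    using Cauchy_Schwarz_integral[of ?r M Y] r_sq Y_sq by simp
  also have "\<dots> \<le> c * m"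
    using expectation_le_of_cond_exp_le[OF Y_sq cond_moment] \<open>0 \<le> m\<close> r_sq_mean
    by (simp add: mult_right_mono mult.commute[of m])
  finally show ?thesis
    using m \<open>0 < c\<close> by (simp add: ennreal_leI flip: ennreal_mult)
qed

lemma ipw_second_moment_le:
  assumes [measurable]: "e \<in> borel_measurable N" and e_pos: "\<And>x. 0 < e x"
    and "0 < \<delta>" and overlap: "AE \<omega> in M. \<delta> \<le> propensity \<omega>"
    and Y_sq: "integrable M (\<lambda>\<omega>. (Y \<omega>)\<^sup>2)" and "0 \<le> c"
    and cond_moment: "AE \<omega> in M. real_cond_exp M (sigmaX M N X) (\<lambda>\<omega>. (Y \<omega>)\<^sup>2) \<omega> \<le> c"
  shows "(\<integral>\<^sup>+\<omega>. ennreal ((T \<omega> * Y \<omega> / e (X \<omega>))\<^sup>2) \<partial>M)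
      \<le> ennreal (2 * c / \<delta>) * ((\<integral>\<^sup>+\<omega>. ennreal ((propensity \<omega> / e (X \<omega>) - 1)\<^sup>2) \<partial>M) + 1)"
proof -
  let ?w = "\<lambda>\<omega>. propensity \<omega> / (e (X \<omega>))\<^sup>2"
  have nn_cond_moment: "AE \<omega> in M. nn_cond_exp M (sigmaX M N X) (\<lambda>\<omega>. ennreal ((Y \<omega>)\<^sup>2)) \<omega> \<le> ennreal c"
    using nn_cond_exp_eq_real_cond_exp[OF Y_sq zero_le_power2] cond_moment
    by eventually_elim (simp add: ennreal_leI)
  have "(\<integral>\<^sup>+\<omega>. ennreal ((T \<omega> * Y \<omega> / e (X \<omega>))\<^sup>2) \<partial>M)
      = (\<integral>\<^sup>+\<omega>. ennreal (T \<omega>) * ennreal ((Y \<omega>)\<^sup>2 / (e (X \<omega>))\<^sup>2) \<partial>M)"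
    using T_binary by (intro nn_integral_cong) (auto simp: power_divide)
  also have "\<dots> = (\<integral>\<^sup>+\<omega>. ennreal (propensity \<omega>) * ennreal ((Y \<omega>)\<^sup>2 / (e (X \<omega>))\<^sup>2) \<partial>M)"
    using nn_integral_T_eq_propensity[of "\<lambda>(x, y). ennreal (y\<^sup>2 / (e x)\<^sup>2)"] by simp
  also have "\<dots> = (\<integral>\<^sup>+\<omega>. ennreal (?w \<omega>) * ennreal ((Y \<omega>)\<^sup>2) \<partial>M)"
    using propensity_nonneg
    by (intro nn_integral_cong_AE) (auto elim!: eventually_mono simp: ennreal_mult[symmetric])
  also have "\<dots> = (\<integral>\<^sup>+\<omega>. ennreal (?w \<omega>) * nn_cond_exp M (sigmaX M N X) (\<lambda>\<omega>. ennreal ((Y \<omega>)\<^sup>2)) \<omega> \<partial>M)"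
    by (rule nn_cond_exp_intg[symmetric]) auto
  also have "\<dots> \<le> (\<integral>\<^sup>+\<omega>. ennreal (?w \<omega>) * ennreal c \<partial>M)"
    using nn_cond_moment by (intro nn_integral_mono_AE) (auto elim!: eventually_mono intro: mult_left_mono)
  also have "\<dots> \<le> (\<integral>\<^sup>+\<omega>. ennreal (2 * c / \<delta>) * (ennreal ((propensity \<omega> / e (X \<omega>) - 1)\<^sup>2) + 1) \<partial>M)"
  proof (intro nn_integral_mono_AE, use overlap in eventually_elim)
    case (elim \<omega>)
    let ?r2 = "(propensity \<omega> / e (X \<omega>) - 1)\<^sup>2"
    have "ennreal (?w \<omega>) * ennreal c = ennreal (?w \<omega> * c)"
      using \<open>0 < \<delta>\<close> \<open>0 \<le> c\<close> elim by (intro ennreal_mult[symmetric]) auto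
    also have "\<dots> \<le> ennreal (2 * c / \<delta> * (?r2 + 1))"
      using mult_right_mono[OF ratio_div_square_le[OF \<open>0 < \<delta>\<close> elim e_pos] \<open>0 \<le> c\<close>]
      by (intro ennreal_leI) (simp add: field_simps)
    also have "\<dots> = ennreal (2 * c / \<delta>) * (ennreal ?r2 + 1)"
      using \<open>0 < \<delta>\<close> \<open>0 \<le> c\<close> by (subst ennreal_mult) (auto simp: ennreal_plus)
    finally show ?case .
  qed
  also have "\<dots> = ennreal (2 * c / \<delta>) * ((\<integral>\<^sup>+\<omega>. ennreal ((propensity \<omega> / e (X \<omega>) - 1)\<^sup>2) \<partial>M) + 1)"
    by (simp add: nn_integral_cmult nn_integral_add emeasure_space_1)
  finally show ?thesis .
qed

end

theorem proposition3:
  fixes M :: "'a measure" and N :: "'b measure"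
    and T Y1 :: "'a \<Rightarrow> real" and X :: "'a \<Rightarrow> 'b"
    and Tc Y1c Yc :: "nat \<Rightarrow> 'a \<Rightarrow> real" and Xc :: "nat \<Rightarrow> 'a \<Rightarrow> 'b"
    and n p :: nat and f :: "nat \<Rightarrow> 'b \<Rightarrow> real" and \<gamma> :: "nat \<Rightarrow> real"
    and c \<delta> :: real
  assumes prob: "prob_space M"
    and n_pos: "n \<ge> 1"
    and f0: "\<And>x. f 0 x = 1"
    and f_meas: "\<And>j. j \<le> p \<Longrightarrow> f j \<in> borel_measurable N"
    and T_meas: "T \<in> borel_measurable M" and X_meas: "X \<in> M \<rightarrow>\<^sub>M N"
    and Y1_meas: "Y1 \<in> borel_measurable M"
    and T_bin: "\<forall>\<omega>\<in>space M. T \<omega> \<in> {0, 1}"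
    and Tc_bin: "\<forall>i<n. \<forall>\<omega>\<in>space M. Tc i \<omega> \<in> {0, 1}"
    and iid_indep: "prob_space.indep_vars M (\<lambda>_. borel \<Otimes>\<^sub>M N \<Otimes>\<^sub>M borel)
                      (\<lambda>i \<omega>. (Tc i \<omega>, Xc i \<omega>, Y1c i \<omega>)) {..<n}"
    and iid_dist: "\<forall>i<n. distr M (borel \<Otimes>\<^sub>M N \<Otimes>\<^sub>M borel) (\<lambda>\<omega>. (Tc i \<omega>, Xc i \<omega>, Y1c i \<omega>))
                      = distr M (borel \<Otimes>\<^sub>M N \<Otimes>\<^sub>M borel) (\<lambda>\<omega>. (T \<omega>, X \<omega>, Y1 \<omega>))"
    and Yc_meas: "\<forall>i<n. Yc i \<in> borel_measurable M"
    and consistency: "\<forall>i<n. \<forall>\<omega>\<in>space M. Tc i \<omega> = 1 \<longrightarrow> Yc i \<omega> = Y1c i \<omega>"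
    and unconf: "cond_indep_given M N X T Y1"
    and Y1_sq_int: "integrable M (\<lambda>\<omega>. (Y1 \<omega>)\<^sup>2)"
    and c_pos: "c > 0" and \<delta>_pos: "0 < \<delta>" and \<delta>_lt1: "\<delta> < 1"
    and cond_mom: "AE \<omega> in M. real_cond_exp M (sigmaX M N X) (\<lambda>w. (Y1 w)\<^sup>2) \<omega> \<le> c"
    and overlap: "AE \<omega> in M. pistar M N X T \<omega> \<ge> \<delta>"
  shows "(\<integral>\<^sup>+ \<omega>. ennreal ((ipw_est p f \<gamma> n Tc Xc Yc \<omega> - prob_space.expectation M Y1)\<^sup>2) \<partial>M)
           \<le> ennreal c * msre M N X T p f \<gamma>
             + ennreal (2 / (real n * \<delta>)) * ennreal c * (1 + msre M N X T p f \<gamma>)"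
proof -
  \<comment> \<open>The bound holds for every positive measurable propensity model.\<close>
  interpret unconfounded_treatment M N X T Y1
    using prob T_meas X_meas Y1_meas T_bin unconf
    by (simp add: unconfounded_treatment_def unconfounded_treatment_axioms_def)
  define e where "e = logit_ps p f \<gamma>"
  have e_meas [measurable]: "e \<in> borel_measurable N"
    unfolding e_def logit_ps_def[abs_def] using f_meas by measurable
  have e_pos: "\<And>x. 0 < e x"
    unfolding e_def logit_ps_def by (simp add: add_pos_pos)
  define \<psi> where "\<psi> = (\<lambda>(t, x, y). t * y / e x :: real)"
  have \<psi>_meas [measurable]: "\<psi> \<in> borel_measurable (borel \<Otimes>\<^sub>M N \<Otimes>\<^sub>M borel)"
    unfolding \<psi>_def by measurable
  have ipw: "ipw_est p f \<gamma> n Tc Xc Yc \<omega> = 1 / real n * (\<Sum>i<n. \<psi> (Tc i \<omega>, Xc i \<omega>, Y1c i \<omega>))"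
    if "\<omega> \<in> space M" for \<omega>
    unfolding ipw_est_def \<psi>_def e_def using that Tc_bin consistency
    by (fastforce intro!: sum.cong)
  have scale: "ennreal (1 / real n) * ennreal (2 * c / \<delta>) = ennreal (2 / (real n * \<delta>)) * ennreal c"
    using c_pos \<delta>_pos by (simp add: ennreal_mult[symmetric])
  have "(\<integral>\<^sup>+\<omega>. ennreal ((ipw_est p f \<gamma> n Tc Xc Yc \<omega> - expectation Y1)\<^sup>2) \<partial>M)
      = (\<integral>\<^sup>+\<omega>. ennreal ((1 / real n * (\<Sum>i<n. \<psi> (Tc i \<omega>, Xc i \<omega>, Y1c i \<omega>)) - expectation Y1)\<^sup>2) \<partial>M)"
    by (intro nn_integral_cong) (simp add: ipw)
  also have "\<dots> \<le> ennreal ((expectation (\<lambda>\<omega>. T \<omega> * Y1 \<omega> / e (X \<omega>)) - expectation Y1)\<^sup>2)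
      + ennreal (1 / real n) * (\<integral>\<^sup>+\<omega>. ennreal ((T \<omega> * Y1 \<omega> / e (X \<omega>))\<^sup>2) \<partial>M)"
    using nn_integral_square_deviation_sample_mean_iid_le[OF iid_indep _ _ \<psi>_meas, of "\<lambda>\<omega>. (T \<omega>, X \<omega>, Y1 \<omega>)"]
      iid_dist n_pos by (simp add: \<psi>_def)
  also have "\<dots> \<le> ennreal c * msre M N X T p f \<gamma>
      + ennreal (1 / real n) * (ennreal (2 * c / \<delta>) * (msre M N X T p f \<gamma> + 1))"
    using ipw_bias_le[OF e_meas e_pos Y1_sq_int c_pos cond_mom]
      ipw_second_moment_le[OF e_meas e_pos \<delta>_pos overlap Y1_sq_int _ cond_mom] c_pos
    unfolding msre_def e_def by (intro add_mono mult_left_mono) auto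
  also have "\<dots> = ennreal c * msre M N X T p f \<gamma>
      + ennreal (2 / (real n * \<delta>)) * ennreal c * (1 + msre M N X T p f \<gamma>)"
    unfolding mult.assoc[symmetric] scale by (simp add: add.commute)
  finally show ?thesis .
qed

end
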